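(* Let $G$ be a finite group, let $H$ be a normal subgroup of $G$, and let $M$ be a subgroup with $H\leq M\leq G$. Let $C\subseteq G\setminus H$ be a union of some cosets of $H$ in $G$, and let $S_M,T_M$ be subsets of $M\setminus\{1\}$ such that $S_M^\alpha=T_M$ for some $\alpha\in\mathrm{Aut}(M)$ which fixes (setwise) every coset of $H$ in $M$. Put $S=C\cup S_M$ and $T=C\cup T_M$. Then $\mathrm{Cay}(G,S)\cong\mathrm{Cay}(G,T)$.
   Context: For a group $G$ and a subset $S\subseteq G$ with $1\notin S$, the Cayley digraph $\mathrm{Cay}(G,S)$ has vertex set $G$ and arc set $\{(g,sg)\mid g\in G,\ s\in S\}$. Isomorphism means digraph isomorphism. *)

theory Defs
  imports "HOL-Algebra.Algebra"
begin

definition cay_arcs :: "('a, 'b) monoid_scheme \<Rightarrow> 'a set \<Rightarrow> ('a \<times> 'a) set" where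
  "cay_arcs G S = {(g, s \<otimes>\<^bsub>G\<^esub> g) | g s. g \<in> carrier G \<and> s \<in> S}"

definition digraph_iso :: "'a set \<Rightarrow> ('a \<times> 'a) set \<Rightarrow> 'b set \<Rightarrow> ('b \<times> 'b) set \<Rightarrow> bool" where
  "digraph_iso V1 A1 V2 A2 \<longleftrightarrow>
     (\<exists>f. bij_betw f V1 V2 \<and>
          (\<forall>x\<in>V1. \<forall>y\<in>V1. (x, y) \<in> A1 \<longleftrightarrow> (f x, f y) \<in> A2))"

definition cay_iso :: "('a, 'b) monoid_scheme \<Rightarrow> 'a set \<Rightarrow> 'a set \<Rightarrow> bool" where
  "cay_iso G S T = digraph_iso (carrier G) (cay_arcs G S) (carrier G) (cay_arcs G T)"

end

theory Submission
  imports Defs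
begin

(* Fix a right transversal of M in G and let f act on each right coset M t of a representative t
  by f (m t) = alpha(m) t.  This is a permutation of G, and for x, y in one coset it turns the
  difference y x^-1 in M into alpha(y x^-1), so arcs from S_M go to arcs from T_M.  As alpha fixes
  the H-cosets in M, f g lies in H g for every g; H being normal, f y (f x)^-1 then lies in the
  H-coset of y x^-1.  Both C and M are unions of H-cosets, so f preserves the arcs coming from C
  and never moves a difference into or out of M. *)

lemma (in group) cay_arcs_iff:
  assumes "S \<subseteq> carrier G" "x \<in> carrier G" "y \<in> carrier G"
  shows "(x, y) \<in> cay_arcs G S \<longleftrightarrow> y \<otimes> inv x \<in> S"
proof
  assume "(x, y) \<in> cay_arcs G S"
  then obtain s where "s \<in> S" "y = s \<otimes> x" unfolding cay_arcs_def by auto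
  then show "y \<otimes> inv x \<in> S" using assms by (simp add: m_assoc subsetD)
next
  assume "y \<otimes> inv x \<in> S"
  moreover have "y = (y \<otimes> inv x) \<otimes> x" using assms by (simp add: m_assoc)
  ultimately show "(x, y) \<in> cay_arcs G S" unfolding cay_arcs_def using assms(2) by blast
qed

lemma (in group) cay_isoI:
  assumes "S \<subseteq> carrier G" "T \<subseteq> carrier G"
    and bij: "bij_betw f (carrier G) (carrier G)"
    and diff: "\<And>x y. x \<in> carrier G \<Longrightarrow> y \<in> carrier G \<Longrightarrow>
      y \<otimes> inv x \<in> S \<longleftrightarrow> f y \<otimes> inv (f x) \<in> T"
  shows "cay_iso G S T"
  unfolding cay_iso_def digraph_iso_def
proof (intro exI conjI ballI)
  show "bij_betw f (carrier G) (carrier G)" by (fact bij)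
  fix x y assume x: "x \<in> carrier G" and y: "y \<in> carrier G"
  have "f x \<in> carrier G" "f y \<in> carrier G"
    using bij_betw_apply[OF bij] x y by blast+
  then show "(x, y) \<in> cay_arcs G S \<longleftrightarrow> (f x, f y) \<in> cay_arcs G T"
    using cay_arcs_iff[OF assms(1) x y] cay_arcs_iff[OF assms(2)] diff[OF x y] by blast
qed

lemma (in group) mult_mult_inv_cancel:
  assumes "a \<in> carrier G" "b \<in> carrier G" "t \<in> carrier G"
  shows "a \<otimes> t \<otimes> inv (b \<otimes> t) = a \<otimes> inv b"
proof -
  have "a \<otimes> t \<otimes> inv (b \<otimes> t) = a \<otimes> (t \<otimes> inv t) \<otimes> inv b"
    using assms by (simp only: inv_mult_group m_assoc inv_closed m_closed)
  also have "\<dots> = a \<otimes> inv b" using assms by simp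
  finally show ?thesis .
qed

lemma (in normal) rcos_mult_inv_mem:
  assumes "a \<in> carrier G" "b \<in> carrier G" "a' \<in> H #> a" "b' \<in> H #> b"
  shows "a' \<otimes> inv b' \<in> H #> (a \<otimes> inv b)"
proof -
  have "inv b' \<in> H #> inv b"
    using assms(4) rcos_inv[OF assms(2)] unfolding SET_INV_def by blast
  then have "a' \<otimes> inv b' \<in> (H #> a) <#> (H #> inv b)"
    using assms(3) unfolding set_mult_def by blast
  then show ?thesis using assms(1,2) by (simp add: rcos_sum)
qed

lemma (in group) rcos_mem_iff_of_rcos_closed:
  assumes "subgroup H G" and closed: "\<And>c. c \<in> C \<Longrightarrow> H #> c \<subseteq> C"
    and "d \<in> carrier G" "e \<in> H #> d"
  shows "e \<in> C \<longleftrightarrow> d \<in> C"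
proof
  assume "e \<in> C"
  have "d \<in> H #> d" by (rule rcos_self[OF assms(3,1)])
  also have "H #> d = H #> e" by (rule repr_independence[OF assms(4,3,1)])
  finally show "d \<in> C" using closed[OF \<open>e \<in> C\<close>] by blast
next
  assume "d \<in> C"
  then show "e \<in> C" using closed assms(4) by blast
qed

lemma (in group) rcos_subset_Union_rcosets:
  assumes "subgroup H G" "K \<subseteq> rcosets H" "c \<in> \<Union>K"
  shows "H #> c \<subseteq> \<Union>K"
proof -
  obtain A where "A \<in> K" "c \<in> A" using assms(3) by blast
  moreover then obtain a where "a \<in> carrier G" "A = H #> a"
    using assms(2) unfolding RCOSETS_def by blast
  ultimately have "H #> c = A" using repr_independence assms(1) by metis
  then show ?thesis using \<open>A \<in> K\<close> by blast
qed

lemma (in group) rcos_subset_subgroup: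
  assumes "subgroup M G" "H \<subseteq> M" "m \<in> M"
  shows "H #> m \<subseteq> M"
  using assms by (auto simp: r_coset_def subgroup.m_closed)

locale subgroup_automorphism = group G + M: subgroup M G for G (structure) and M +
  fixes \<alpha>
  assumes automorphism: "\<alpha> \<in> iso (G\<lparr>carrier := M\<rparr>) (G\<lparr>carrier := M\<rparr>)"
begin

lemma aut_closed: "x \<in> M \<Longrightarrow> \<alpha> x \<in> M"
  and aut_mult: "x \<in> M \<Longrightarrow> y \<in> M \<Longrightarrow> \<alpha> (x \<otimes> y) = \<alpha> x \<otimes> \<alpha> y"
  and aut_inj: "inj_on \<alpha> M"
  and aut_image: "\<alpha> ` M = M"
  using automorphism by (auto simp: iso_iff hom_def)

lemma aut_mult_inv:
  assumes "x \<in> M" "y \<in> M"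
  shows "\<alpha> (x \<otimes> inv y) = \<alpha> x \<otimes> inv (\<alpha> y)"
proof -
  have xy: "x \<otimes> inv y \<in> M" using assms by (simp add: M.m_closed M.m_inv_closed)
  have "\<alpha> (x \<otimes> inv y) \<otimes> \<alpha> y = \<alpha> (x \<otimes> inv y \<otimes> y)" using aut_mult[OF xy assms(2)] by simp
  also have "x \<otimes> inv y \<otimes> y = x" using assms by (simp add: m_assoc)
  finally show ?thesis
    using inv_solve_right aut_closed[OF xy] aut_closed[OF assms(1)] aut_closed[OF assms(2)]
    by (metis M.mem_carrier)
qed

definition rep :: "'a \<Rightarrow> 'a"
  where "rep g = (SOME t. t \<in> M #> g)"

definition twist :: "'a \<Rightarrow> 'a"
  where "twist g = \<alpha> (g \<otimes> inv (rep g)) \<otimes> rep g"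

lemma rep_in_rcos: "g \<in> carrier G \<Longrightarrow> rep g \<in> M #> g"
  unfolding rep_def by (rule someI, rule rcos_self[OF _ M.subgroup_axioms])

lemma rep_closed: "g \<in> carrier G \<Longrightarrow> rep g \<in> carrier G"
  by (rule M.elemrcos_carrier[OF is_group _ rep_in_rcos])

lemma rcos_rep: "g \<in> carrier G \<Longrightarrow> M #> rep g = M #> g"
  using repr_independence[OF rep_in_rcos _ M.subgroup_axioms] by simp

lemma rep_eq:
  assumes "x \<in> carrier G" "y \<in> M #> x"
  shows "rep y = rep x"
proof -
  have "M #> x = M #> y" by (rule repr_independence[OF assms(2,1) M.subgroup_axioms])
  then show ?thesis unfolding rep_def by simp
qed

lemma mult_inv_rep_closed:
  assumes "g \<in> carrier G"
  shows "g \<otimes> inv (rep g) \<in> M"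
proof -
  have "g \<in> M #> rep g"
    using rcos_rep[OF assms] rcos_self[OF assms M.subgroup_axioms] by simp
  then show ?thesis by (rule M.rcos_module_imp[OF is_group rep_closed[OF assms]])
qed

lemma twist_closed: "g \<in> carrier G \<Longrightarrow> twist g \<in> carrier G"
  unfolding twist_def by (simp add: aut_closed mult_inv_rep_closed rep_closed)

lemma twist_in_rcos:
  assumes "g \<in> carrier G"
  shows "twist g \<in> M #> g"
proof -
  have "twist g \<in> M #> rep g"
    unfolding twist_def
    by (rule rcosI[OF aut_closed[OF mult_inv_rep_closed[OF assms]] M.subset rep_closed[OF assms]])
  then show ?thesis using rcos_rep[OF assms] by simp
qed

lemma twist_mult_inv:
  assumes "x \<in> carrier G" "y \<in> carrier G" "y \<otimes> inv x \<in> M"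
  shows "twist y \<otimes> inv (twist x) = \<alpha> (y \<otimes> inv x)"
proof -
  define t where "t = rep x"
  have t: "t \<in> carrier G" unfolding t_def by (rule rep_closed[OF assms(1)])
  have rep_y: "rep y = t"
    unfolding t_def by (rule rep_eq[OF assms(1) M.rcos_module_rev[OF is_group assms]])
  have mx: "x \<otimes> inv t \<in> M" unfolding t_def by (rule mult_inv_rep_closed[OF assms(1)])
  have my: "y \<otimes> inv t \<in> M" using mult_inv_rep_closed[OF assms(2)] rep_y by simp
  have "twist y \<otimes> inv (twist x) = \<alpha> (y \<otimes> inv t) \<otimes> inv (\<alpha> (x \<otimes> inv t))"
    unfolding twist_def rep_y t_def[symmetric]
    using t aut_closed[OF mx] aut_closed[OF my] by (simp add: mult_mult_inv_cancel)
  also have "\<dots> = \<alpha> ((y \<otimes> inv t) \<otimes> inv (x \<otimes> inv t))"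
    using aut_mult_inv[OF my mx] by simp
  also have "(y \<otimes> inv t) \<otimes> inv (x \<otimes> inv t) = y \<otimes> inv x"
    using mult_mult_inv_cancel[of y x "inv t"] assms t by simp
  finally show ?thesis .
qed

lemma inj_on_twist: "inj_on twist (carrier G)"
proof (rule inj_onI)
  fix x y assume x: "x \<in> carrier G" and y: "y \<in> carrier G" and eq: "twist x = twist y"
  have rep_xy: "rep x = rep y"
    using rep_eq[OF x twist_in_rcos[OF x]] rep_eq[OF y twist_in_rcos[OF y]] eq by simp
  have mx: "x \<otimes> inv (rep x) \<in> M" by (rule mult_inv_rep_closed[OF x])
  have my: "y \<otimes> inv (rep x) \<in> M" using mult_inv_rep_closed[OF y] rep_xy by simp
  have "\<alpha> (x \<otimes> inv (rep x)) \<otimes> rep x = \<alpha> (y \<otimes> inv (rep x)) \<otimes> rep x"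
    using eq rep_xy unfolding twist_def by simp
  then have "\<alpha> (x \<otimes> inv (rep x)) = \<alpha> (y \<otimes> inv (rep x))"
    using aut_closed[OF mx] aut_closed[OF my] rep_closed[OF x] by simp
  then have "x \<otimes> inv (rep x) = y \<otimes> inv (rep x)"
    by (rule inj_onD[OF aut_inj _ mx my])
  then show "x = y" using x y rep_closed[OF x] by simp
qed

lemma twist_image_carrier: "twist ` carrier G = carrier G"
proof
  show "twist ` carrier G \<subseteq> carrier G" using twist_closed by blast
  show "carrier G \<subseteq> twist ` carrier G"
  proof
    fix g assume g: "g \<in> carrier G"
    define t where "t = rep g"
    have t: "t \<in> carrier G" "M #> t = M #> g"
      unfolding t_def by (rule rep_closed[OF g], rule rcos_rep[OF g])
    have "g \<otimes> inv t \<in> \<alpha> ` M"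
      unfolding aut_image t_def by (rule mult_inv_rep_closed[OF g])
    then obtain m where m: "m \<in> M" and \<alpha>m: "\<alpha> m = g \<otimes> inv t" by (metis imageE)
    have "m \<otimes> t \<in> M #> g" using rcosI[OF m M.subset t(1)] t(2) by simp
    then have "rep (m \<otimes> t) = t" unfolding t_def by (rule rep_eq[OF g])
    then have "twist (m \<otimes> t) = g"
      using m \<alpha>m t g unfolding twist_def by (simp add: m_assoc)
    moreover have "m \<otimes> t \<in> carrier G" using m t by simp
    ultimately show "g \<in> twist ` carrier G" by (metis image_eqI)
  qed
qed

lemma bij_betw_twist: "bij_betw twist (carrier G) (carrier G)"
  by (rule bij_betw_imageI[OF inj_on_twist twist_image_carrier])

lemma twist_in_normal_rcos:
  assumes "subgroup H G" "\<forall>x\<in>M. \<alpha> ` (H #> x) = H #> x" "g \<in> carrier G"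
  shows "twist g \<in> H #> g"
proof -
  define m where "m = g \<otimes> inv (rep g)"
  have m: "m \<in> M" using mult_inv_rep_closed assms(3) unfolding m_def by simp
  have "m \<in> H #> m" using rcos_self[OF _ assms(1)] m by simp
  then have "\<alpha> m \<in> H #> m" using assms(2) m by (metis imageI)
  then obtain h where h: "h \<in> H" "\<alpha> m = h \<otimes> m" unfolding r_coset_def by blast
  have "twist g = h \<otimes> (m \<otimes> rep g)"
    using h subgroup.mem_carrier[OF assms(1) h(1)] m rep_closed[OF assms(3)]
    unfolding twist_def m_def[symmetric] by (simp add: m_assoc)
  also have "m \<otimes> rep g = g" using assms(3) rep_closed unfolding m_def by (simp add: m_assoc)
  finally show ?thesis using rcosI[OF h(1) subgroup.subset[OF assms(1)] assms(3)] by simp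
qed

lemma twist_mult_inv_mem_iff:
  assumes "H \<lhd> G" "H \<subseteq> M" "\<forall>x\<in>M. \<alpha> ` (H #> x) = H #> x"
    and C_closed: "\<And>c. c \<in> C \<Longrightarrow> H #> c \<subseteq> C" and "S \<subseteq> M"
    and x: "x \<in> carrier G" and y: "y \<in> carrier G"
  shows "y \<otimes> inv x \<in> C \<union> S \<longleftrightarrow> twist y \<otimes> inv (twist x) \<in> C \<union> \<alpha> ` S"
proof -
  interpret H: normal H G by fact
  define d where "d = y \<otimes> inv x"
  define e where "e = twist y \<otimes> inv (twist x)"
  have d: "d \<in> carrier G" unfolding d_def using x y by simp
  have "e \<in> H #> d"
    unfolding d_def e_def
    by (rule H.rcos_mult_inv_mem[OF y x twist_in_normal_rcos[OF H.subgroup_axioms assms(3) y]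
          twist_in_normal_rcos[OF H.subgroup_axioms assms(3) x]])
  then have C_iff: "e \<in> C \<longleftrightarrow> d \<in> C" and M_iff: "e \<in> M \<longleftrightarrow> d \<in> M"
    using rcos_mem_iff_of_rcos_closed[OF H.subgroup_axioms C_closed d]
      rcos_mem_iff_of_rcos_closed[OF H.subgroup_axioms
        rcos_subset_subgroup[OF M.subgroup_axioms assms(2)] d]
    by blast+
  have "e \<in> \<alpha> ` S \<longleftrightarrow> d \<in> S"
  proof (cases "d \<in> M")
    case True
    then have "e = \<alpha> d" unfolding d_def e_def using twist_mult_inv[OF x y] by simp
    then show ?thesis using inj_on_image_mem_iff[OF aut_inj True assms(5)] by simp
  next
    case False
    then show ?thesis using M_iff aut_image assms(5) by blast
  qed
  with C_iff show ?thesis unfolding d_def e_def by blast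
qed

theorem cay_iso_Un_aut_image:
  assumes "H \<lhd> G" "H \<subseteq> M" "\<forall>x\<in>M. \<alpha> ` (H #> x) = H #> x"
    and "K \<subseteq> rcosets H" "S \<subseteq> M"
  shows "cay_iso G (\<Union>K \<union> S) (\<Union>K \<union> \<alpha> ` S)"
proof (rule cay_isoI[OF _ _ bij_betw_twist])
  have H: "subgroup H G" by (rule normal_imp_subgroup[OF assms(1)])
  have "\<Union>K \<subseteq> carrier G" using subgroup.rcosets_carrier[OF H is_group] assms(4) by blast
  then show "\<Union>K \<union> S \<subseteq> carrier G" "\<Union>K \<union> \<alpha> ` S \<subseteq> carrier G"
    using assms(5) aut_closed by auto
  show "y \<otimes> inv x \<in> \<Union>K \<union> S \<longleftrightarrow> twist y \<otimes> inv (twist x) \<in> \<Union>K \<union> \<alpha> ` S"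
    if "x \<in> carrier G" "y \<in> carrier G" for x y
    using twist_mult_inv_mem_iff[OF assms(1-3) rcos_subset_Union_rcosets[OF H assms(4)] assms(5) that]
    by blast
qed

end

theorem lemma3p1:
  fixes G :: "('a, 'b) monoid_scheme"
    and H M C S_M T_M :: "'a set"
    and \<alpha> :: "'a \<Rightarrow> 'a"
  assumes "group G" and "finite (carrier G)"
    and "H \<lhd> G"
    and "subgroup M G" and "H \<subseteq> M"
    and "C \<subseteq> carrier G - H"
    and "\<exists>K. K \<subseteq> rcosets\<^bsub>G\<^esub> H \<and> C = \<Union> K"
    and "S_M \<subseteq> M - {\<one>\<^bsub>G\<^esub>}" and "T_M \<subseteq> M - {\<one>\<^bsub>G\<^esub>}"
    and "\<alpha> \<in> iso (G\<lparr>carrier := M\<rparr>) (G\<lparr>carrier := M\<rparr>)"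
    and "\<forall>x\<in>M. \<alpha> ` (H #>\<^bsub>G\<^esub> x) = H #>\<^bsub>G\<^esub> x"
    and "\<alpha> ` S_M = T_M"
  shows "cay_iso G (C \<union> S_M) (C \<union> T_M)"
proof -
  interpret subgroup_automorphism G M \<alpha>
    using assms(1,4,10) by (simp add: subgroup_automorphism_def subgroup_automorphism_axioms_def)
  obtain K where "K \<subseteq> rcosets\<^bsub>G\<^esub> H" "C = \<Union>K" using assms(7) by blast
  then show ?thesis
    using cay_iso_Un_aut_image[OF assms(3,5,11)] assms(8,12) by blast
qed

end
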